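(* Let $n\ge3$, $m_1,\dots,m_n>0$, $M=\mathrm{diag}(m_1,\dots,m_n)$, $\omega\in\mathbb R$, and let $\varphi_1,\dots,\varphi_n$ be longitudes of a fixed-point configuration on the equator. Let $H,G$ be the $n\times n$ symmetric matrices with entries (for $i\ne j$) $H_{ij}=\frac{m_im_j}{\sin^3d_{ij}}$, $H_{ii}=-\sum_{j\neq i}H_{ij}\cos d_{ij}$, $G_{ij}=\frac{-2m_im_j\cos d_{ij}}{\sin^3 d_{ij}}$, $G_{ii}=-\sum_{j\neq i}G_{ij}$, let $H_\omega=H-\omega^2M$, and let $$L=\begin{bmatrix}0&0&M^{-1}&0\\0&0&0&M^{-1}\\H_\omega&0&0&0\\0&G&0&0\end{bmatrix}\in\mathbb C^{4n\times4n}.$$ Then $H_\omega M^{-1}$ and $GM^{-1}$ are diagonalizable. If $u\in\mathbb C^n$ is an eigenvector of $H_\omega M^{-1}$ (respectively of $GM^{-1}$) with eigenvalue $\lambda\neq0$, then there is a two-dimensional $L$-invariant subspace of $\mathbb C^{4n}$ on which, in a suitable basis, $L$ is $\begin{bmatrix}\sqrt\lambda&0\\0&-\sqrt\lambda\end{bmatrix}$. If $u$ is an eigenvector of $H_\omega M^{-1}$ (respectively of $GM^{-1}$) with eigenvalue $0$, then there is a two-dimensional $L$-invariant subspace of $\mathbb C^{4n}$ on which, in a suitable basis, $L$ is $\begin{bmatrix}0&1\\0&0\end{bmatrix}$.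
   Context: Masses lie on the equator of the unit sphere at longitudes $\varphi_i$, with geodesic distances $d_{ij}\in(0,\pi)$ for $i\ne j$. The force function is $V=\sum_{i<j}m_im_j\cot d_{ij}$ and a fixed point is a critical point of $V$ on the configuration space $\{d_{ij}\notin\{0,\pi\}\}\subset(\mathbb S^2)^n$. Here $\sqrt\lambda$ denotes any complex square root of $\lambda$. *)

theory Defs
  imports "HOL-Analysis.Analysis" "Jordan_Normal_Form.Char_Poly"
begin

text \<open>Points of the unit sphere are unit vectors in real^3; masses and bodies are indexed by 0..<n.\<close>

definition geod :: "real^3 \<Rightarrow> real^3 \<Rightarrow> real" where
  "geod x y = arccos (x \<bullet> y)"

definition equator_pt :: "real \<Rightarrow> real^3" where
  "equator_pt \<phi> = vector [cos \<phi>, sin \<phi>, 0]"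

definition force_fun :: "nat \<Rightarrow> (nat \<Rightarrow> real) \<Rightarrow> (nat \<Rightarrow> real^3) \<Rightarrow> real" where
  "force_fun n m q = (\<Sum>(i,j)\<in>{(i,j). i < j \<and> j < n}. m i * m j * cot (geod (q i) (q j)))"

definition config_space :: "nat \<Rightarrow> (nat \<Rightarrow> real^3) set" where
  "config_space n = {q. (\<forall>i<n. norm (q i) = 1) \<and>
     (\<forall>i<n. \<forall>j<n. i \<noteq> j \<longrightarrow> geod (q i) (q j) \<noteq> 0 \<and> geod (q i) (q j) \<noteq> pi)}"

text \<open>Critical point of V on the configuration space in (S^2)^n: the derivative of V
  along every differentiable curve in (S^2)^n through q vanishes.\<close>
definition fixed_point :: "nat \<Rightarrow> (nat \<Rightarrow> real) \<Rightarrow> (nat \<Rightarrow> real^3) \<Rightarrow> bool" where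
  "fixed_point n m q \<longleftrightarrow> q \<in> config_space n \<and>
     (\<forall>\<gamma> :: real \<Rightarrow> nat \<Rightarrow> real^3.
        (\<forall>t. \<forall>i<n. norm (\<gamma> t i) = 1) \<longrightarrow> (\<forall>i<n. \<gamma> 0 i = q i) \<longrightarrow>
        (\<forall>i<n. (\<lambda>t. \<gamma> t i) differentiable (at 0)) \<longrightarrow>
        ((\<lambda>t. force_fun n m (\<gamma> t)) has_real_derivative 0) (at 0))"

definition dist_eq :: "(nat \<Rightarrow> real) \<Rightarrow> nat \<Rightarrow> nat \<Rightarrow> real" where
  "dist_eq \<phi> i j = geod (equator_pt (\<phi> i)) (equator_pt (\<phi> j))"

definition Hoff :: "(nat \<Rightarrow> real) \<Rightarrow> (nat \<Rightarrow> real) \<Rightarrow> nat \<Rightarrow> nat \<Rightarrow> real" where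
  "Hoff m \<phi> i j = m i * m j / (sin (dist_eq \<phi> i j)) ^ 3"

definition Goff :: "(nat \<Rightarrow> real) \<Rightarrow> (nat \<Rightarrow> real) \<Rightarrow> nat \<Rightarrow> nat \<Rightarrow> real" where
  "Goff m \<phi> i j = -2 * m i * m j * cos (dist_eq \<phi> i j) / (sin (dist_eq \<phi> i j)) ^ 3"

definition Hmat :: "nat \<Rightarrow> (nat \<Rightarrow> real) \<Rightarrow> (nat \<Rightarrow> real) \<Rightarrow> complex mat" where
  "Hmat n m \<phi> = mat n n (\<lambda>(i,j). complex_of_real
     (if i = j then - (\<Sum>k\<in>{0..<n} - {i}. Hoff m \<phi> i k * cos (dist_eq \<phi> i k))
      else Hoff m \<phi> i j))"

definition Gmat :: "nat \<Rightarrow> (nat \<Rightarrow> real) \<Rightarrow> (nat \<Rightarrow> real) \<Rightarrow> complex mat" where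
  "Gmat n m \<phi> = mat n n (\<lambda>(i,j). complex_of_real
     (if i = j then - (\<Sum>k\<in>{0..<n} - {i}. Goff m \<phi> i k) else Goff m \<phi> i j))"

definition Mmat :: "nat \<Rightarrow> (nat \<Rightarrow> real) \<Rightarrow> complex mat" where
  "Mmat n m = mat_diag n (\<lambda>i. complex_of_real (m i))"

definition Minv :: "nat \<Rightarrow> (nat \<Rightarrow> real) \<Rightarrow> complex mat" where
  "Minv n m = mat_diag n (\<lambda>i. complex_of_real (1 / m i))"

definition Homega :: "nat \<Rightarrow> (nat \<Rightarrow> real) \<Rightarrow> (nat \<Rightarrow> real) \<Rightarrow> real \<Rightarrow> complex mat" where
  "Homega n m \<phi> \<omega> = Hmat n m \<phi> - complex_of_real (\<omega>^2) \<cdot>\<^sub>m Mmat n m"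

definition Lmat :: "nat \<Rightarrow> (nat \<Rightarrow> real) \<Rightarrow> (nat \<Rightarrow> real) \<Rightarrow> real \<Rightarrow> complex mat" where
  "Lmat n m \<phi> \<omega> = four_block_mat
     (0\<^sub>m (2*n) (2*n))
     (four_block_mat (Minv n m) (0\<^sub>m n n) (0\<^sub>m n n) (Minv n m))
     (four_block_mat (Homega n m \<phi> \<omega>) (0\<^sub>m n n) (0\<^sub>m n n) (Gmat n m \<phi>))
     (0\<^sub>m (2*n) (2*n))"

definition diagonalizable :: "'a::semiring_1 mat \<Rightarrow> bool" where
  "diagonalizable A \<longleftrightarrow> square_mat A \<and> (\<exists>D. diagonal_mat D \<and> similar_mat A D)"

definition mat2 :: "'a::zero \<Rightarrow> 'a \<Rightarrow> 'a \<Rightarrow> 'a \<Rightarrow> 'a mat" where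
  "mat2 a b c d = mat 2 2 (\<lambda>(i,j). if i = 0 then (if j = 0 then a else b) else (if j = 0 then c else d))"

text \<open>There is a two-dimensional L-invariant subspace, with basis v1, v2, such that the
  matrix of L restricted to it in this basis is B (column j = coordinates of L v_j).\<close>
definition has_invariant_2block :: "complex mat \<Rightarrow> complex mat \<Rightarrow> bool" where
  "has_invariant_2block L B \<longleftrightarrow> (\<exists>v1 v2.
     v1 \<in> carrier_vec (dim_row L) \<and> v2 \<in> carrier_vec (dim_row L) \<and>
     (\<forall>a b. a \<cdot>\<^sub>v v1 + b \<cdot>\<^sub>v v2 = 0\<^sub>v (dim_row L) \<longrightarrow> a = 0 \<and> b = 0) \<and>
     L *\<^sub>v v1 = B $$ (0,0) \<cdot>\<^sub>v v1 + B $$ (1,0) \<cdot>\<^sub>v v2 \<and>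
     L *\<^sub>v v2 = B $$ (0,1) \<cdot>\<^sub>v v1 + B $$ (1,1) \<cdot>\<^sub>v v2)"

end

theory Submission
  imports Defs "Jordan_Normal_Form.Jordan_Normal_Form_Uniqueness" "Jordan_Normal_Form.Jordan_Normal_Form_Existence"
begin

text \<open>\<open>H\<^sub>\<omega>\<close> and \<open>G\<close> are real symmetric, hence Hermitian, and \<open>M\<^sup>-\<^sup>1\<close> is a positive diagonal
  matrix, so \<open>H\<^sub>\<omega> M\<^sup>-\<^sup>1\<close> and \<open>G M\<^sup>-\<^sup>1\<close> are similar to the Hermitian matrices
  \<open>M\<^sup>-\<^sup>1\<^sup>/\<^sup>2 H\<^sub>\<omega> M\<^sup>-\<^sup>1\<^sup>/\<^sup>2\<close> and \<open>M\<^sup>-\<^sup>1\<^sup>/\<^sup>2 G M\<^sup>-\<^sup>1\<^sup>/\<^sup>2\<close>. For a Hermitian \<open>K\<close>,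
  \<open>|(K - e) v|\<^sup>2 = \<langle>v, (K - e)\<^sup>2 v\<rangle>\<close> once \<open>e\<close> is real, so \<open>ker (K - e)\<^sup>2 = ker (K - e)\<close> and all
  Jordan blocks of \<open>K\<close> have size one.

  For the invariant planes write \<open>L = [[0, B], [C, 0]]\<close> with \<open>B = diag(M\<^sup>-\<^sup>1, M\<^sup>-\<^sup>1)\<close> and
  \<open>C = diag(H\<^sub>\<omega>, G)\<close>. An eigenvector \<open>u\<close> of \<open>H\<^sub>\<omega> M\<^sup>-\<^sup>1\<close> or \<open>G M\<^sup>-\<^sup>1\<close>, padded with zeros,
  is an eigenvector \<open>w\<close> of \<open>C B\<close> with the same eigenvalue \<open>\<lambda>\<close>. If \<open>\<lambda> = s\<^sup>2 \<noteq> 0\<close>, the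
  vectors \<open>(B w / \<plusminus>s, w)\<close> are eigenvectors of \<open>L\<close> for \<open>\<plusminus>s\<close>; if \<open>\<lambda> = 0\<close>, then
  \<open>(0, w) \<mapsto> (B w, 0) \<mapsto> 0\<close> is a Jordan chain.\<close>

no_notation vec_nth (infixl \<open>$\<close> 90)

definition hermitian_mat :: "complex mat \<Rightarrow> bool" where
  "hermitian_mat K \<longleftrightarrow> (\<forall>i<dim_row K. \<forall>j<dim_col K. K $$ (i,j) = cnj (K $$ (j,i)))"

lemma hermitian_matI:
  assumes "K \<in> carrier_mat n n" and "\<And>i j. i < n \<Longrightarrow> j < n \<Longrightarrow> K $$ (i,j) = cnj (K $$ (j,i))"
  shows "hermitian_mat K"
  unfolding hermitian_mat_def carrier_matD[OF assms(1)] using assms(2) by blast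

lemma hermitian_matD:
  assumes "hermitian_mat K" and "K \<in> carrier_mat n n" and "i < n" and "j < n"
  shows "cnj (K $$ (i,j)) = K $$ (j,i)"
proof -
  have "K $$ (j,i) = cnj (K $$ (i,j))"
    using assms(1,3,4) unfolding hermitian_mat_def carrier_matD[OF assms(2)] by blast
  then show ?thesis by simp
qed

lemma hermitian_mat_scalar_prod:
  assumes K: "K \<in> carrier_mat n n" and herm: "hermitian_mat K"
    and x: "x \<in> carrier_vec n" and y: "y \<in> carrier_vec n"
  shows "(K *\<^sub>v x) \<bullet>c y = x \<bullet>c (K *\<^sub>v y)"
proof -
  have "(K *\<^sub>v x) \<bullet>c y = (\<Sum>i<n. (\<Sum>j<n. K $$ (i,j) * x $ j) * cnj (y $ i))"
    using K x y by (simp add: scalar_prod_def mult_mat_vec_def row_def lessThan_atLeast0)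
  also have "\<dots> = (\<Sum>i<n. \<Sum>j<n. x $ j * (K $$ (i,j) * cnj (y $ i)))"
    by (simp add: sum_distrib_left sum_distrib_right mult_ac)
  also have "\<dots> = (\<Sum>j<n. \<Sum>i<n. x $ j * (K $$ (i,j) * cnj (y $ i)))"
    by (rule sum.swap)
  also have "\<dots> = (\<Sum>j<n. x $ j * cnj (\<Sum>i<n. K $$ (j,i) * y $ i))"
    by (auto simp: sum_distrib_left cnj_sum mult_ac hermitian_matD[OF herm K] intro!: sum.cong)
  also have "\<dots> = x \<bullet>c (K *\<^sub>v y)"
    using K x y by (simp add: scalar_prod_def mult_mat_vec_def row_def lessThan_atLeast0)
  finally show ?thesis .
qed

lemma hermitian_mat_eigenvalue_real:
  assumes K: "K \<in> carrier_mat n n" and herm: "hermitian_mat K" and ev: "eigenvector K w e"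
  shows "cnj e = e"
proof -
  have w: "w \<in> carrier_vec n" "w \<noteq> 0\<^sub>v n" and Kw: "K *\<^sub>v w = e \<cdot>\<^sub>v w"
    using ev K unfolding eigenvector_def by auto
  have "e * (w \<bullet>c w) = (K *\<^sub>v w) \<bullet>c w"
    unfolding Kw using w by (subst smult_scalar_prod_distrib[of _ n]) auto
  also have "\<dots> = w \<bullet>c (K *\<^sub>v w)" by (rule hermitian_mat_scalar_prod[OF K herm w(1) w(1)])
  also have "\<dots> = cnj e * (w \<bullet>c w)"
    unfolding Kw conjugate_smult_vec using w by (subst scalar_prod_smult_distrib[of _ n]) auto
  finally show ?thesis using w by simp
qed

lemma hermitian_mat_char_matrix:
  assumes K: "K \<in> carrier_mat n n" and herm: "hermitian_mat K" and e: "cnj e = e"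
  shows "hermitian_mat (char_matrix K e)"
proof (rule hermitian_matI)
  show "char_matrix K e \<in> carrier_mat n n" using K by simp
  fix i j assume ij: "i < n" "j < n"
  have "cnj (K $$ (j,i)) = K $$ (i,j)" by (rule hermitian_matD[OF herm K ij(2,1)])
  then show "char_matrix K e $$ (i,j) = cnj (char_matrix K e $$ (j,i))"
    using K ij e by (auto simp: char_matrix_def)
qed

lemma hermitian_mat_kernel_square:
  assumes N: "N \<in> carrier_mat n n" and herm: "hermitian_mat N"
    and v: "v \<in> carrier_vec n" and NNv: "N *\<^sub>v (N *\<^sub>v v) = 0\<^sub>v n"
  shows "N *\<^sub>v v = 0\<^sub>v n"
proof -
  have Nv: "N *\<^sub>v v \<in> carrier_vec n" using N v by simp
  have "(N *\<^sub>v v) \<bullet>c (N *\<^sub>v v) = v \<bullet>c (N *\<^sub>v (N *\<^sub>v v))"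
    by (rule hermitian_mat_scalar_prod[OF N herm v Nv])
  also have "\<dots> = 0" unfolding NNv using v by simp
  finally show ?thesis using Nv by simp
qed

text \<open>If \<open>(K - e)\<^sup>2 v = 0\<close> but \<open>(K - e) v \<noteq> 0\<close>, then \<open>(K - e) v\<close> is an eigenvector, so \<open>e\<close> is
  real and \<open>K - e\<close> is Hermitian as well.\<close>
lemma hermitian_mat_char_matrix_kernel_square:
  assumes K: "K \<in> carrier_mat n n" and herm: "hermitian_mat K" and v: "v \<in> carrier_vec n"
    and NNv: "char_matrix K e *\<^sub>v (char_matrix K e *\<^sub>v v) = 0\<^sub>v n"
  shows "char_matrix K e *\<^sub>v v = 0\<^sub>v n"
proof (rule ccontr)
  let ?N = "char_matrix K e"
  assume Nv: "?N *\<^sub>v v \<noteq> 0\<^sub>v n"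
  have N: "?N \<in> carrier_mat n n" using K by simp
  have "eigenvector K (?N *\<^sub>v v) e"
    using NNv Nv N v unfolding eigenvector_char_matrix[OF K] by simp
  then have "hermitian_mat ?N"
    by (intro hermitian_mat_char_matrix[OF K herm] hermitian_mat_eigenvalue_real[OF K herm])
  from hermitian_mat_kernel_square[OF N this v NNv] Nv show False by simp
qed

lemma hermitian_mat_dim_gen_eigenspace_2:
  assumes K: "K \<in> carrier_mat n n" and herm: "hermitian_mat K"
  shows "dim_gen_eigenspace K e 2 = dim_gen_eigenspace K e 1"
proof -
  let ?N = "char_matrix K e"
  have N: "?N \<in> carrier_mat n n" using K by simp
  have "?N ^\<^sub>m 2 = ?N * ?N" using N by (simp add: numeral_2_eq_2)
  moreover have "mat_kernel (?N * ?N) = mat_kernel ?N"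
    using hermitian_mat_char_matrix_kernel_square[OF K herm] N
    by (auto simp: mat_kernel[of _ n n] assoc_mult_mat_vec)
  ultimately show ?thesis using N unfolding dim_gen_eigenspace_def kernel_dim_def by simp
qed

lemma diagonal_mat_jordan_matrix:
  assumes "\<forall>(d,a)\<in>set n_as. d = 1"
  shows "diagonal_mat (jordan_matrix (n_as :: (nat \<times> 'a :: {zero,one}) list))"
  using assms
proof (induction n_as)
  case Nil
  then show ?case by (simp add: jordan_matrix_def diagonal_mat_def)
next
  case (Cons da n_as)
  obtain d a where da: "da = (d,a)" by force
  with Cons have "d = 1" and "diagonal_mat (jordan_matrix n_as)" by auto
  then show ?case unfolding da jordan_matrix_def diagonal_mat_def by (auto simp: Let_def)
qed

text \<open>By \<open>hermitian_mat_dim_gen_eigenspace_2\<close> every Jordan block has size \<open>min 2 d = min 1 d\<close>,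
  i.e. size one.\<close>
lemma hermitian_mat_diagonalizable:
  assumes K: "K \<in> carrier_mat n n" and herm: "hermitian_mat K"
  shows "diagonalizable K"
proof -
  obtain as where "char_poly K = (\<Prod>a\<leftarrow>as. [:- a, 1:])" using char_poly_factorized[OF K] by blast
  then obtain n_as where jnf: "jordan_nf K n_as" using jordan_nf_exists[OF K] by blast
  have "d = 1" if da: "(d,a) \<in> set n_as" for d a
  proof -
    define ds where "ds = map fst [(n, e)\<leftarrow>n_as . e = a]"
    have "(\<Sum>d\<leftarrow>ds. min 1 d) + (\<Sum>d\<leftarrow>ds. min 2 d - min 1 d) = (\<Sum>d\<leftarrow>ds. min 2 d)"
      by (simp add: sum_list_addf[symmetric])
    also have "\<dots> = (\<Sum>d\<leftarrow>ds. min 1 d)"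
      using hermitian_mat_dim_gen_eigenspace_2[OF K herm, of a]
      unfolding dim_gen_eigenspace[OF jnf] ds_def .
    finally have "\<forall>d\<in>set ds. min 2 d - min 1 d = 0" by simp
    moreover have "d \<in> set ds" using da unfolding ds_def by force
    moreover have "d \<noteq> 0" using jnf da unfolding jordan_nf_def by force
    ultimately show "d = 1" by fastforce
  qed
  then have "diagonal_mat (jordan_matrix n_as)" by (intro diagonal_mat_jordan_matrix) auto
  with jnf K show ?thesis unfolding diagonalizable_def jordan_nf_def by auto
qed

lemma diagonalizable_similar:
  assumes "similar_mat A B" and "diagonalizable B"
  shows "diagonalizable A"
  using assms similar_mat_trans similar_matD[OF assms(1)] unfolding diagonalizable_def by fastforce

lemma mat_diag_mult_mult_mat_diag:
  assumes "A \<in> carrier_mat n n"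
  shows "mat_diag n f * A * mat_diag n g = mat n n (\<lambda>(i,j). f i * A $$ (i,j) * g j)"
  using assms by (auto simp: mat_diag_mult_left mat_diag_mult_right[of _ n n] intro!: eq_matI)

text \<open>\<open>R W\<close> is similar to the Hermitian matrix \<open>W\<^sup>1\<^sup>/\<^sup>2 R W\<^sup>1\<^sup>/\<^sup>2\<close>.\<close>
lemma hermitian_mat_mult_pos_diag_diagonalizable:
  assumes R: "R \<in> carrier_mat n n" and herm: "hermitian_mat R" and w: "\<And>i. i < n \<Longrightarrow> w i > 0"
  shows "diagonalizable (R * mat_diag n (\<lambda>i. complex_of_real (w i)))"
proof -
  define s where "s i = complex_of_real (sqrt (w i))" for i
  define t where "t i = complex_of_real (1 / sqrt (w i))" for i
  let ?S = "mat_diag n s" and ?T = "mat_diag n t"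
  have ts: "t i * s i = 1" and ss: "s i * s i = complex_of_real (w i)" if "i < n" for i
    using w[OF that] unfolding t_def s_def by (simp_all flip: of_real_mult)
  have TS: "?T * ?S = 1\<^sub>m n" and ST: "?S * ?T = 1\<^sub>m n"
    unfolding mat_diag_diag by (auto intro!: eq_matI simp: mat_diag_def ts mult.commute[of "s _"])
  define K where "K = ?S * R * ?S"
  have K: "K \<in> carrier_mat n n" unfolding K_def mat_diag_mult_mult_mat_diag[OF R] by simp
  have herm_K: "hermitian_mat K"
  proof (rule hermitian_matI[OF K])
    fix i j assume ij: "i < n" "j < n"
    have "cnj (R $$ (j,i)) = R $$ (i,j)" by (rule hermitian_matD[OF herm R ij(2,1)])
    then show "K $$ (i,j) = cnj (K $$ (j,i))"
      using ij R unfolding K_def mat_diag_mult_mult_mat_diag[OF R] by (simp add: s_def)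
  qed
  have entry: "t i * (s i * R $$ (i,j) * s j) * s j = R $$ (i,j) * complex_of_real (w j)"
    if "i < n" "j < n" for i j
  proof -
    have "t i * (s i * R $$ (i,j) * s j) * s j = (t i * s i) * R $$ (i,j) * (s j * s j)"
      by (simp add: mult_ac)
    then show ?thesis using ts[OF that(1)] ss[OF that(2)] by simp
  qed
  have "R * mat_diag n (\<lambda>i. complex_of_real (w i)) = ?T * K * ?S"
    using R K unfolding K_def mat_diag_mult_right[OF R]
    by (auto intro!: eq_matI simp: mat_diag_mult_mult_mat_diag entry)
  moreover have "similar_mat (?T * K * ?S) K"
    using K TS ST by (intro similar_matI[of _ _ ?T ?S n]) (auto intro!: mult_carrier_mat)
  moreover have "diagonalizable K" by (rule hermitian_mat_diagonalizable[OF K herm_K])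
  ultimately show ?thesis by (simp add: diagonalizable_similar)
qed

lemma mat2_index [simp]:
  "mat2 a b c d $$ (0,0) = a" "mat2 a b c d $$ (0,1) = b"
  "mat2 a b c d $$ (1,0) = c" "mat2 a b c d $$ (1,1) = d"
  unfolding mat2_def by auto

lemma nonzero_vec_index:
  assumes "v \<in> carrier_vec n" and "v \<noteq> 0\<^sub>v n"
  obtains i where "i < n" and "v $ i \<noteq> 0"
  using assms by (metis carrier_vecD eq_vecI index_zero_vec)

lemma antidiag_block_mult_vec:
  assumes B: "B \<in> carrier_mat k k" and C: "C \<in> carrier_mat k k"
    and x: "x \<in> carrier_vec k" and y: "y \<in> carrier_vec k"
  shows "four_block_mat (0\<^sub>m k k) B C (0\<^sub>m k k) *\<^sub>v (x @\<^sub>v y) = (B *\<^sub>v y) @\<^sub>v (C *\<^sub>v x)"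
proof -
  have "0\<^sub>m k k *\<^sub>v z = 0\<^sub>v k" if "z \<in> carrier_vec k" for z :: "'a vec"
    using that by (intro eq_vecI) auto
  then show ?thesis
    using four_block_mat_mult_vec[OF zero_carrier_mat B C zero_carrier_mat x y] B C x y by simp
qed

text \<open>With \<open>C B w = \<lambda> w\<close> and \<open>t\<^sup>2 = \<lambda>\<close>, the vector \<open>(B w / t, w)\<close> is an eigenvector of
  \<open>[[0, B], [C, 0]]\<close> with eigenvalue \<open>t\<close>; the two roots \<open>\<plusminus>s\<close> give the invariant plane.\<close>
lemma antidiag_block_invariant_sqrt:
  fixes B C :: "complex mat"
  assumes B: "B \<in> carrier_mat k k" and C: "C \<in> carrier_mat k k"
    and ev: "eigenvector (C * B) w lam" and lam: "lam \<noteq> 0" and s: "s\<^sup>2 = lam"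
  shows "has_invariant_2block (four_block_mat (0\<^sub>m k k) B C (0\<^sub>m k k)) (mat2 s 0 0 (-s))"
proof -
  let ?L = "four_block_mat (0\<^sub>m k k) B C (0\<^sub>m k k)"
  have w: "w \<in> carrier_vec k" "w \<noteq> 0\<^sub>v k" and CBw: "C *\<^sub>v (B *\<^sub>v w) = lam \<cdot>\<^sub>v w"
    using ev B C unfolding eigenvector_def by (auto simp: assoc_mult_mat_vec)
  have Bw: "B *\<^sub>v w \<in> carrier_vec k" using B w by simp
  have s0: "s \<noteq> 0" using lam s by auto
  define v where "v t = ((1 / t) \<cdot>\<^sub>v (B *\<^sub>v w)) @\<^sub>v w" for t
  have v: "v t \<in> carrier_vec (dim_row ?L)" for t
    unfolding v_def using B Bw w by auto
  have Lv: "?L *\<^sub>v v t = t \<cdot>\<^sub>v v t" if t: "t\<^sup>2 = lam" for t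
  proof -
    have "t \<noteq> 0" using lam t by auto
    have "C *\<^sub>v ((1 / t) \<cdot>\<^sub>v (B *\<^sub>v w)) = (1 / t) \<cdot>\<^sub>v (lam \<cdot>\<^sub>v w)"
      using C Bw CBw by (simp add: mult_mat_vec)
    also have "\<dots> = t \<cdot>\<^sub>v w"
      using \<open>t \<noteq> 0\<close> t by (intro eq_vecI) (auto simp: power2_eq_square)
    finally have "?L *\<^sub>v v t = (B *\<^sub>v w) @\<^sub>v (t \<cdot>\<^sub>v w)"
      unfolding v_def using antidiag_block_mult_vec[OF B C] Bw w by simp
    also have "\<dots> = t \<cdot>\<^sub>v v t"
      unfolding v_def using \<open>t \<noteq> 0\<close> Bw w by (intro eq_vecI) auto
    finally show ?thesis .
  qed
  have indep: "a = 0 \<and> b = 0" if ab: "a \<cdot>\<^sub>v v s + b \<cdot>\<^sub>v v (-s) = 0\<^sub>v (dim_row ?L)" for a b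
  proof -
    obtain i where i: "i < k" "w $ i \<noteq> 0" using nonzero_vec_index[OF w] .
    have "B *\<^sub>v w \<noteq> 0\<^sub>v k"
    proof
      assume "B *\<^sub>v w = 0\<^sub>v k"
      then have "C *\<^sub>v (B *\<^sub>v w) = 0\<^sub>v k" using C by (auto intro!: eq_vecI)
      then have "lam * w $ i = 0" using CBw i w by (metis index_smult_vec(1) index_zero_vec(1) carrier_vecD)
      with lam i show False by simp
    qed
    then obtain j where j: "j < k" "(B *\<^sub>v w) $ j \<noteq> 0" using nonzero_vec_index[OF Bw] by blast
    have dimL: "dim_row ?L = k + k" using B by simp
    have "(a + b) * w $ i = 0"
      using arg_cong[OF ab, of "\<lambda>x. x $ (k + i)"] i carrier_vecD[OF w(1)] carrier_vecD[OF Bw]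
      unfolding dimL v_def by (simp add: distrib_right)
    moreover have "(a - b) * (B *\<^sub>v w) $ j = 0"
      using arg_cong[OF ab, of "\<lambda>x. x $ j"] j s0 carrier_vecD[OF w(1)] carrier_vecD[OF Bw]
      unfolding dimL v_def by (simp add: field_simps)
    ultimately show ?thesis using i j by auto
  qed
  have "?L *\<^sub>v v s = s \<cdot>\<^sub>v v s + 0 \<cdot>\<^sub>v v (-s)" and "?L *\<^sub>v v (-s) = 0 \<cdot>\<^sub>v v s + (-s) \<cdot>\<^sub>v v (-s)"
    using Lv s carrier_vecD[OF v] by (auto intro!: eq_vecI)
  with v indep show ?thesis unfolding has_invariant_2block_def mat2_index by blast
qed

lemma antidiag_block_invariant_nilpotent:
  fixes B C :: "complex mat"
  assumes B: "B \<in> carrier_mat k k" and C: "C \<in> carrier_mat k k"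
    and ev: "eigenvector (C * B) w 0" and Bw_nz: "B *\<^sub>v w \<noteq> 0\<^sub>v k"
  shows "has_invariant_2block (four_block_mat (0\<^sub>m k k) B C (0\<^sub>m k k)) (mat2 0 1 0 0)"
proof -
  let ?L = "four_block_mat (0\<^sub>m k k) B C (0\<^sub>m k k)"
  have w: "w \<in> carrier_vec k" "w \<noteq> 0\<^sub>v k" and CBw: "C *\<^sub>v (B *\<^sub>v w) = 0\<^sub>v k"
    using ev B C unfolding eigenvector_def by (auto simp: assoc_mult_mat_vec)
  have Bw: "B *\<^sub>v w \<in> carrier_vec k" using B w by simp
  have B0: "B *\<^sub>v 0\<^sub>v k = 0\<^sub>v k" and C0: "C *\<^sub>v 0\<^sub>v k = 0\<^sub>v k"
    using B C by (auto intro!: eq_vecI)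
  define v1 where "v1 = (B *\<^sub>v w) @\<^sub>v 0\<^sub>v k"
  define v2 where "v2 = 0\<^sub>v k @\<^sub>v w"
  have dimL: "dim_row ?L = k + k" using B by simp
  have v: "v1 \<in> carrier_vec (dim_row ?L)" "v2 \<in> carrier_vec (dim_row ?L)"
    unfolding dimL v1_def v2_def using Bw w by auto
  have "?L *\<^sub>v v1 = 0 \<cdot>\<^sub>v v1 + 0 \<cdot>\<^sub>v v2"
    unfolding v1_def v2_def antidiag_block_mult_vec[OF B C Bw zero_carrier_vec] B0 CBw
    using carrier_vecD[OF Bw] carrier_vecD[OF w(1)] by (auto intro!: eq_vecI)
  moreover have "?L *\<^sub>v v2 = 1 \<cdot>\<^sub>v v1 + 0 \<cdot>\<^sub>v v2"
    unfolding v1_def v2_def antidiag_block_mult_vec[OF B C zero_carrier_vec w(1)] C0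
    using carrier_vecD[OF Bw] carrier_vecD[OF w(1)] by (auto intro!: eq_vecI)
  moreover have "a = 0 \<and> b = 0" if ab: "a \<cdot>\<^sub>v v1 + b \<cdot>\<^sub>v v2 = 0\<^sub>v (dim_row ?L)" for a b
  proof -
    obtain i where i: "i < k" "w $ i \<noteq> 0" using nonzero_vec_index[OF w] .
    obtain j where j: "j < k" "(B *\<^sub>v w) $ j \<noteq> 0" using nonzero_vec_index[OF Bw Bw_nz] .
    have "b * w $ i = 0"
      using arg_cong[OF ab, of "\<lambda>x. x $ (k + i)"] i carrier_vecD[OF w(1)] carrier_vecD[OF Bw]
      unfolding dimL v1_def v2_def by simp
    moreover have "a * (B *\<^sub>v w) $ j = 0"
      using arg_cong[OF ab, of "\<lambda>x. x $ j"] j carrier_vecD[OF w(1)] carrier_vecD[OF Bw]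
      unfolding dimL v1_def v2_def by simp
    ultimately show ?thesis using i j by auto
  qed
  ultimately show ?thesis using v unfolding has_invariant_2block_def mat2_index by blast
qed

lemma zero_vec_append: "0\<^sub>v (n + n') = 0\<^sub>v n @\<^sub>v 0\<^sub>v n'"
  by (intro eq_vecI) auto

lemma eigenvector_block_diag_left:
  assumes A: "A \<in> carrier_mat n n" and D: "D \<in> carrier_mat n' n'" and ev: "eigenvector A u lam"
  shows "eigenvector (four_block_mat A (0\<^sub>m n n') (0\<^sub>m n' n) D) (u @\<^sub>v 0\<^sub>v n') lam"
proof -
  have u: "u \<in> carrier_vec n" "u \<noteq> 0\<^sub>v n" and Au: "A *\<^sub>v u = lam \<cdot>\<^sub>v u"
    using ev A unfolding eigenvector_def by auto
  have "D *\<^sub>v 0\<^sub>v n' = 0\<^sub>v n'" using D by (auto intro!: eq_vecI)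
  then have "four_block_mat A (0\<^sub>m n n') (0\<^sub>m n' n) D *\<^sub>v (u @\<^sub>v 0\<^sub>v n') = lam \<cdot>\<^sub>v (u @\<^sub>v 0\<^sub>v n')"
    unfolding mult_mat_vec_split[OF A D u(1) zero_carrier_vec] Au
    using u(1) by (auto intro!: eq_vecI)
  moreover have "u @\<^sub>v 0\<^sub>v n' \<noteq> 0\<^sub>v (n + n')" using u by (simp add: zero_vec_append)
  ultimately show ?thesis using A D u unfolding eigenvector_def by auto
qed

lemma eigenvector_block_diag_right:
  assumes A: "A \<in> carrier_mat n n" and D: "D \<in> carrier_mat n' n'" and ev: "eigenvector D u lam"
  shows "eigenvector (four_block_mat A (0\<^sub>m n n') (0\<^sub>m n' n) D) (0\<^sub>v n @\<^sub>v u) lam"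
proof -
  have u: "u \<in> carrier_vec n'" "u \<noteq> 0\<^sub>v n'" and Du: "D *\<^sub>v u = lam \<cdot>\<^sub>v u"
    using ev D unfolding eigenvector_def by auto
  have "A *\<^sub>v 0\<^sub>v n = 0\<^sub>v n" using A by (auto intro!: eq_vecI)
  then have "four_block_mat A (0\<^sub>m n n') (0\<^sub>m n' n) D *\<^sub>v (0\<^sub>v n @\<^sub>v u) = lam \<cdot>\<^sub>v (0\<^sub>v n @\<^sub>v u)"
    unfolding mult_mat_vec_split[OF A D zero_carrier_vec u(1)] Du
    using u(1) by (auto intro!: eq_vecI)
  moreover have "0\<^sub>v n @\<^sub>v u \<noteq> 0\<^sub>v (n + n')"
    using u by (simp add: zero_vec_append append_vec_eq[OF zero_carrier_vec zero_carrier_vec])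
  ultimately show ?thesis using A D u unfolding eigenvector_def by auto
qed

lemma index_mat_diag_mult_vec:
  assumes "u \<in> carrier_vec n" and "i < n"
  shows "(mat_diag n f *\<^sub>v u) $ i = f i * u $ i"
  using assms by (simp add: mat_diag_def scalar_prod_def sum.remove[of _ i])

lemma mat_diag_mult_vec_nonzero:
  assumes f: "\<And>i. i < n \<Longrightarrow> f i \<noteq> 0" and u: "u \<in> carrier_vec n" "u \<noteq> 0\<^sub>v n"
  shows "mat_diag n f *\<^sub>v u \<noteq> (0\<^sub>v n :: 'a :: {comm_ring_1, semiring_no_zero_divisors} vec)"
proof
  obtain i where i: "i < n" "u $ i \<noteq> 0" using nonzero_vec_index[OF u] .
  assume "mat_diag n f *\<^sub>v u = 0\<^sub>v n"
  then have "f i * u $ i = 0" using index_mat_diag_mult_vec[OF u(1) i(1), of f] i by simp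
  with f i show False by simp
qed

lemma four_block_mat_diag:
  "four_block_mat (mat_diag n f) (0\<^sub>m n n') (0\<^sub>m n' n) (mat_diag n' g)
     = mat_diag (n + n') (\<lambda>i. if i < n then f i else g (i - n))"
  by (rule eq_matI) (auto simp: mat_diag_def)

lemma dist_eq_sym: "dist_eq \<phi> i j = dist_eq \<phi> j i"
  by (simp add: dist_eq_def geod_def inner_commute)

lemma Homega_carrier: "Homega n m \<phi> \<omega> \<in> carrier_mat n n"
  unfolding Homega_def Mmat_def by (intro minus_carrier_mat smult_carrier_mat mat_diag_dim)

lemma Gmat_carrier: "Gmat n m \<phi> \<in> carrier_mat n n"
  unfolding Gmat_def by simp

lemma Minv_carrier: "Minv n m \<in> carrier_mat n n"
  unfolding Minv_def by simp

lemma hermitian_Homega: "hermitian_mat (Homega n m \<phi> \<omega>)"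
proof (rule hermitian_matI[OF Homega_carrier])
  fix i j assume "i < n" "j < n"
  then show "Homega n m \<phi> \<omega> $$ (i,j) = cnj (Homega n m \<phi> \<omega> $$ (j,i))"
    by (simp add: Homega_def Hmat_def Mmat_def Hoff_def mat_diag_def dist_eq_sym[of \<phi> i j] mult.commute)
qed

lemma hermitian_Gmat: "hermitian_mat (Gmat n m \<phi>)"
proof (rule hermitian_matI[OF Gmat_carrier])
  fix i j assume "i < n" "j < n"
  then show "Gmat n m \<phi> $$ (i,j) = cnj (Gmat n m \<phi> $$ (j,i))"
    by (simp add: Gmat_def Goff_def dist_eq_sym[of \<phi> i j] mult_ac)
qed

lemma Lmat_antidiag_eigenvector:
  assumes m: "\<forall>i<n. m i > 0"
    and ev: "eigenvector (Homega n m \<phi> \<omega> * Minv n m) u lam \<or> eigenvector (Gmat n m \<phi> * Minv n m) u lam"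
  obtains B C w where "Lmat n m \<phi> \<omega> = four_block_mat (0\<^sub>m (2*n) (2*n)) B C (0\<^sub>m (2*n) (2*n))"
    and "B \<in> carrier_mat (2*n) (2*n)" and "C \<in> carrier_mat (2*n) (2*n)"
    and "eigenvector (C * B) w lam" and "B *\<^sub>v w \<noteq> 0\<^sub>v (2*n)"
proof -
  let ?P = "Minv n m" and ?H = "Homega n m \<phi> \<omega>" and ?G = "Gmat n m \<phi>"
  define B where "B = four_block_mat ?P (0\<^sub>m n n) (0\<^sub>m n n) ?P"
  define C where "C = four_block_mat ?H (0\<^sub>m n n) (0\<^sub>m n n) ?G"
  note carriers = Minv_carrier[of n m] Homega_carrier[of n m \<phi> \<omega>] Gmat_carrier[of n m \<phi>]
  have B: "B \<in> carrier_mat (2*n) (2*n)" and C: "C \<in> carrier_mat (2*n) (2*n)"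
    unfolding B_def C_def mult_2 using carriers by auto
  have "C * B = four_block_mat (?H * ?P) (0\<^sub>m n n) (0\<^sub>m n n) (?G * ?P)"
    unfolding B_def C_def
    using mult_four_block_mat[OF carriers(2) zero_carrier_mat zero_carrier_mat carriers(3)
        carriers(1) zero_carrier_mat zero_carrier_mat carriers(1)] carriers by simp
  with ev carriers obtain w where w: "eigenvector (C * B) w lam"
    using eigenvector_block_diag_left eigenvector_block_diag_right by (metis mult_carrier_mat)
  then have "w \<in> carrier_vec (2*n)" "w \<noteq> 0\<^sub>v (2*n)" using B C unfolding eigenvector_def by auto
  moreover have "m (i - n) \<noteq> 0" if "i < n + n" "\<not> i < n" for i
    using m that by (metis add_less_imp_less_left le_add_diff_inverse not_less order.irrefl)
  ultimately have "B *\<^sub>v w \<noteq> 0\<^sub>v (2*n)"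
    unfolding B_def Minv_def four_block_mat_diag mult_2 using m by (intro mat_diag_mult_vec_nonzero) auto
  moreover have "Lmat n m \<phi> \<omega> = four_block_mat (0\<^sub>m (2*n) (2*n)) B C (0\<^sub>m (2*n) (2*n))"
    unfolding Lmat_def B_def C_def ..
  ultimately show ?thesis using that B C w by blast
qed

theorem lemma2:
  fixes n :: nat and m :: "nat \<Rightarrow> real" and \<omega> :: real and \<phi> :: "nat \<Rightarrow> real"
  assumes "n \<ge> 3"
    and "\<forall>i<n. m i > 0"
    and "fixed_point n m (\<lambda>i. equator_pt (\<phi> i))"
  shows "diagonalizable (Homega n m \<phi> \<omega> * Minv n m)
       \<and> diagonalizable (Gmat n m \<phi> * Minv n m)
       \<and> (\<forall>u lam. (eigenvector (Homega n m \<phi> \<omega> * Minv n m) u lam \<or> eigenvector (Gmat n m \<phi> * Minv n m) u lam)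
              \<longrightarrow> lam \<noteq> 0 \<longrightarrow>
              (\<forall>s. s^2 = lam \<longrightarrow> has_invariant_2block (Lmat n m \<phi> \<omega>) (mat2 s 0 0 (-s))))
       \<and> (\<forall>u. (eigenvector (Homega n m \<phi> \<omega> * Minv n m) u 0 \<or> eigenvector (Gmat n m \<phi> * Minv n m) u 0)
              \<longrightarrow> has_invariant_2block (Lmat n m \<phi> \<omega>) (mat2 0 1 0 0))"
proof (intro conjI allI impI)
  have w: "\<And>i. i < n \<Longrightarrow> 1 / m i > 0" using assms(2) by simp
  show "diagonalizable (Homega n m \<phi> \<omega> * Minv n m)"
    unfolding Minv_def by (rule hermitian_mat_mult_pos_diag_diagonalizable[OF Homega_carrier hermitian_Homega w])
  show "diagonalizable (Gmat n m \<phi> * Minv n m)"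
    unfolding Minv_def by (rule hermitian_mat_mult_pos_diag_diagonalizable[OF Gmat_carrier hermitian_Gmat w])
next
  fix u lam s
  assume ev: "eigenvector (Homega n m \<phi> \<omega> * Minv n m) u lam \<or> eigenvector (Gmat n m \<phi> * Minv n m) u lam"
    and "lam \<noteq> 0" and "s\<^sup>2 = lam"
  from Lmat_antidiag_eigenvector[OF assms(2) ev] show "has_invariant_2block (Lmat n m \<phi> \<omega>) (mat2 s 0 0 (-s))"
    by (metis antidiag_block_invariant_sqrt \<open>lam \<noteq> 0\<close> \<open>s\<^sup>2 = lam\<close>)
next
  fix u
  assume ev: "eigenvector (Homega n m \<phi> \<omega> * Minv n m) u 0 \<or> eigenvector (Gmat n m \<phi> * Minv n m) u 0"
  from Lmat_antidiag_eigenvector[OF assms(2) ev] show "has_invariant_2block (Lmat n m \<phi> \<omega>) (mat2 0 1 0 0)"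
    by (metis antidiag_block_invariant_nilpotent)
qed

end
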